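(* Let $\varphi$ be a Schwartz function on $\mathbb{R}$ such that $d=\operatorname{dist}(\operatorname{supp}\hat\varphi,0)>0$, and let $p$ be a polynomial of degree $n$. Then there is a constant $C>0$ (depending on $\varphi$ and $p$) such that \[ |p(x)(\varphi\ast P_y)(x)|\le C(1+y^n)\frac{e^{-2\pi dy}}{y^{1/2}},\qquad x\in\mathbb{R},\ y>0. \]
   Context: $P_y(t)=\frac{1}{\pi}\frac{y}{t^2+y^2}$ is the Poisson kernel of the upper half plane, and $\hat\varphi(\xi)=\int\varphi(x)e^{-2\pi ix\xi}dx$. *)

theory Defs
  imports "HOL-Analysis.Analysis" "HOL-Computational_Algebra.Polynomial"
begin

definition schwartz :: "(real \<Rightarrow> complex) \<Rightarrow> bool" where
  "schwartz \<phi> \<longleftrightarrow> (\<exists>D :: nat \<Rightarrow> real \<Rightarrow> complex.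
      D 0 = \<phi> \<and>
      (\<forall>m x. (D m has_vector_derivative D (Suc m) x) (at x)) \<and>
      (\<forall>k m. \<exists>B. \<forall>x. \<bar>x\<bar> ^ k * norm (D m x) \<le> B))"

definition fourier :: "(real \<Rightarrow> complex) \<Rightarrow> real \<Rightarrow> complex" where
  "fourier \<phi> \<xi> = (\<integral>x. \<phi> x * cis (- 2 * pi * x * \<xi>) \<partial>lborel)"

definition fsupp :: "(real \<Rightarrow> complex) \<Rightarrow> real set" where
  "fsupp f = closure {x. f x \<noteq> 0}"

definition poisson_kernel :: "real \<Rightarrow> real \<Rightarrow> real" where
  "poisson_kernel y t = (1 / pi) * (y / (t\<^sup>2 + y\<^sup>2))"

definition conv :: "(real \<Rightarrow> complex) \<Rightarrow> (real \<Rightarrow> complex) \<Rightarrow> real \<Rightarrow> complex" where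
  "conv f g x = (\<integral>t. f (x - t) * g t \<partial>lborel)"

end

theory Submission
  imports Defs "HOL-Probability.Characteristic_Functions" "HOL-Probability.Sinc_Integral"
begin

(* For y > 0 the Poisson kernel is a sum of two Fourier-Laplace integrals,
     P_y(u) = int_0^oo (e^(2 pi i (u + iy) xi) + e^(2 pi i (-u + iy) xi)) dxi,
   so by Fubini (phi * P_y)(x) = L(phi^)(x + iy) + L(phi^(- .))(-x + iy), where
   L G z = int_0^oo G(xi) e^(2 pi i z xi) dxi.  Since phi^ vanishes on (-d, d), k integrations
   by parts give z^k L(phi^)(z) = L((t^k phi)^)(z), and (t^k phi)^ again vanishes on (-d, d),
   is bounded and is O(xi^-2).  Estimating the integral over xi > d with the first bound when
   y >= 1 and with the second when y < 1 gives (1 + |z|^n) |L(phi^)(z)| <= K e^(-2 pi d y) / sqrt y.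
   As |x| <= |x +- iy|, the claim follows, even without the factor 1 + y^n. *)

section \<open>Rapidly decreasing functions\<close>

definition rapidly_decreasing :: "(real \<Rightarrow> complex) \<Rightarrow> bool" where
  "rapidly_decreasing g \<longleftrightarrow> continuous_on UNIV g \<and> (\<forall>k. \<exists>B. \<forall>t. \<bar>t\<bar> ^ k * norm (g t) \<le> B)"

definition monomial_mult :: "nat \<Rightarrow> (real \<Rightarrow> complex) \<Rightarrow> real \<Rightarrow> complex" where
  "monomial_mult k g t = of_real t ^ k * g t"

lemma rapidly_decreasing_continuous: "rapidly_decreasing g \<Longrightarrow> continuous_on UNIV g"
  by (simp add: rapidly_decreasing_def)

lemma rapidly_decreasing_measurable [measurable_dest]:
  "rapidly_decreasing g \<Longrightarrow> g \<in> borel_measurable borel"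
  by (simp add: rapidly_decreasing_def borel_measurable_continuous_onI)

lemma rapidly_decreasing_bound: "rapidly_decreasing g \<Longrightarrow> \<exists>B. \<forall>t. \<bar>t\<bar> ^ k * norm (g t) \<le> B"
  by (simp add: rapidly_decreasing_def)

lemma rapidly_decreasing_integrable:
  assumes "rapidly_decreasing g" shows "integrable lborel g"
proof -
  obtain B0 where B0: "\<And>t. \<bar>t\<bar> ^ 0 * norm (g t) \<le> B0" using rapidly_decreasing_bound[OF assms] by blast
  obtain B2 where B2: "\<And>t. \<bar>t\<bar> ^ 2 * norm (g t) \<le> B2" using rapidly_decreasing_bound[OF assms] by blast
  have B2_nonneg: "0 \<le> B2" using B2[of 0] by simp
  show ?thesis
  proof (rule Bochner_Integration.integrable_bound)
    show "integrable lborel (\<lambda>x. (B0 + B2) * inverse (1 + x\<^sup>2))"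
      using integrable_inverse_1_plus_square by (simp add: set_integrable_def)
    show "g \<in> borel_measurable lborel" using assms by measurable
    show "AE x in lborel. norm (g x) \<le> norm ((B0 + B2) * inverse (1 + x\<^sup>2))"
    proof (rule AE_I2)
      fix x
      have "(1 + x\<^sup>2) * norm (g x) \<le> B0 + B2" using B0[of x] B2[of x] by (simp add: algebra_simps)
      moreover have "0 \<le> B0" using B0[of x] norm_ge_zero[of "g x"] by (simp del: norm_ge_zero)
      ultimately show "norm (g x) \<le> norm ((B0 + B2) * inverse (1 + x\<^sup>2))"
        using B2_nonneg by (simp add: abs_of_nonneg pos_le_divide_eq mult.commute add_pos_nonneg
            flip: divide_inverse)
    qed
  qed
qed

lemma rapidly_decreasing_monomial_mult:
  assumes "rapidly_decreasing g" shows "rapidly_decreasing (monomial_mult j g)"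
  unfolding rapidly_decreasing_def
proof safe
  show "continuous_on UNIV (monomial_mult j g)"
    unfolding monomial_mult_def
    by (intro continuous_intros rapidly_decreasing_continuous[OF assms])
  fix k
  obtain B where B: "\<And>t. \<bar>t\<bar> ^ (k + j) * norm (g t) \<le> B"
    using rapidly_decreasing_bound[OF assms] by blast
  have "\<bar>t\<bar> ^ k * norm (monomial_mult j g t) = \<bar>t\<bar> ^ (k + j) * norm (g t)" for t
    by (simp add: monomial_mult_def norm_mult norm_power power_add ac_simps)
  with B show "\<exists>B. \<forall>t. \<bar>t\<bar> ^ k * norm (monomial_mult j g t) \<le> B" by metis
qed

lemma rapidly_decreasing_cmult:
  assumes "rapidly_decreasing g" shows "rapidly_decreasing (\<lambda>t. c * g t)"
  unfolding rapidly_decreasing_def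
proof safe
  show "continuous_on UNIV (\<lambda>t. c * g t)"
    by (intro continuous_intros rapidly_decreasing_continuous[OF assms])
  fix k
  obtain B where B: "\<And>t. \<bar>t\<bar> ^ k * norm (g t) \<le> B" using rapidly_decreasing_bound[OF assms] by blast
  have "\<bar>t\<bar> ^ k * norm (c * g t) \<le> norm c * B" for t
    using mult_left_mono[OF B[of t], of "norm c"] by (simp add: norm_mult ac_simps)
  then show "\<exists>B. \<forall>t. \<bar>t\<bar> ^ k * norm (c * g t) \<le> B" by blast
qed

lemma rapidly_decreasing_add:
  assumes "rapidly_decreasing f" "rapidly_decreasing g" shows "rapidly_decreasing (\<lambda>t. f t + g t)"
  unfolding rapidly_decreasing_def
proof safe
  show "continuous_on UNIV (\<lambda>t. f t + g t)"
    by (intro continuous_intros rapidly_decreasing_continuous assms)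
  fix k
  obtain A where A: "\<And>t. \<bar>t\<bar> ^ k * norm (f t) \<le> A" using rapidly_decreasing_bound[OF assms(1)] by blast
  obtain B where B: "\<And>t. \<bar>t\<bar> ^ k * norm (g t) \<le> B" using rapidly_decreasing_bound[OF assms(2)] by blast
  have "\<bar>t\<bar> ^ k * norm (f t + g t) \<le> A + B" for t
  proof -
    have "\<bar>t\<bar> ^ k * norm (f t + g t) \<le> \<bar>t\<bar> ^ k * (norm (f t) + norm (g t))"
      by (intro mult_left_mono norm_triangle_ineq) auto
    also have "\<dots> \<le> A + B" using A[of t] B[of t] by (simp add: distrib_left)
    finally show ?thesis .
  qed
  then show "\<exists>B. \<forall>t. \<bar>t\<bar> ^ k * norm (f t + g t) \<le> B" by blast
qed

lemma rapidly_decreasing_mult_cis: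
  assumes "rapidly_decreasing g" "continuous_on UNIV h"
  shows "rapidly_decreasing (\<lambda>t. g t * cis (h t))"
  unfolding rapidly_decreasing_def
proof safe
  show "continuous_on UNIV (\<lambda>t. g t * cis (h t))"
    unfolding cis_conv_exp by (intro continuous_intros rapidly_decreasing_continuous assms)
  show "\<exists>B. \<forall>t. \<bar>t\<bar> ^ k * norm (g t * cis (h t)) \<le> B" for k
    using rapidly_decreasing_bound[OF assms(1), of k] by (simp add: norm_mult)
qed

lemma rapidly_decreasing_tendsto_0:
  assumes "rapidly_decreasing g" shows "(g \<longlongrightarrow> 0) at_infinity"
proof -
  obtain B where B: "\<And>t. \<bar>t\<bar> ^ 1 * norm (g t) \<le> B" using rapidly_decreasing_bound[OF assms] by blast
  have "((\<lambda>t::real. B / norm t) \<longlongrightarrow> 0) at_infinity"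
    by (intro tendsto_divide_0[OF tendsto_const] filterlim_at_top_imp_at_infinity filterlim_norm_at_top)
  moreover have "eventually (\<lambda>t. norm (g t) \<le> B / norm t) at_infinity"
    unfolding eventually_at_infinity
  proof (intro exI allI impI)
    fix t :: real assume "1 \<le> norm t"
    then show "norm (g t) \<le> B / norm t"
      using B[of t] by (simp add: pos_le_divide_eq mult.commute)
  qed
  ultimately show ?thesis by (rule Lim_null_comparison[rotated])
qed

lemma integral_derivative_rapidly_decreasing:
  assumes H: "rapidly_decreasing H" and H': "rapidly_decreasing H'"
    and D: "\<And>t. (H has_vector_derivative H' t) (at t)"
  shows "(\<integral>t. H' t \<partial>lborel) = 0"
proof -
  have "(LBINT t=-\<infinity>..\<infinity>. H' t) = 0 - 0"
  proof (rule interval_integral_FTC_integrable)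
    show "isCont H' x" for x
      using rapidly_decreasing_continuous[OF H'] by (simp add: continuous_on_eq_continuous_at)
    show "set_integrable lborel (einterval (- \<infinity>) \<infinity>) H'"
      using rapidly_decreasing_integrable[OF H'] by (simp add: set_integrable_def)
    have "(H \<longlongrightarrow> 0) at_bot"
      by (rule tendsto_mono[OF at_bot_le_at_infinity rapidly_decreasing_tendsto_0[OF H]])
    then show "((H \<circ> real_of_ereal) \<longlongrightarrow> 0) (at_right (- \<infinity>))" by (simp add: ereal_tendsto_simps)
    have "(H \<longlongrightarrow> 0) at_top"
      by (rule tendsto_mono[OF at_top_le_at_infinity rapidly_decreasing_tendsto_0[OF H]])
    then show "((H \<circ> real_of_ereal) \<longlongrightarrow> 0) (at_left \<infinity>)" by (simp add: ereal_tendsto_simps)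
  qed (use D in auto)
  then show ?thesis
    by (simp add: interval_lebesgue_integral_def set_lebesgue_integral_def)
qed

section \<open>The Fourier transform of rapidly decreasing functions\<close>

lemma rapidly_decreasing_fourier_integrand:
  assumes "rapidly_decreasing g" shows "rapidly_decreasing (\<lambda>x. g x * cis (- 2 * pi * x * \<xi>))"
  by (intro rapidly_decreasing_mult_cis assms continuous_on_mult continuous_on_const continuous_on_id)

lemma integrable_fourier_integrand:
  "rapidly_decreasing g \<Longrightarrow> integrable lborel (\<lambda>x. g x * cis (- 2 * pi * x * \<xi>))"
  by (intro rapidly_decreasing_integrable rapidly_decreasing_fourier_integrand)

lemma norm_fourier_le: "norm (fourier g \<xi>) \<le> (\<integral>x. norm (g x) \<partial>lborel)"
proof -
  have "norm (fourier g \<xi>) \<le> (\<integral>x. norm (g x * cis (- 2 * pi * x * \<xi>)) \<partial>lborel)"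
    unfolding fourier_def by (rule integral_norm_bound)
  also have "\<dots> = (\<integral>x. norm (g x) \<partial>lborel)" by (simp add: norm_mult)
  finally show ?thesis .
qed

lemma norm_cis_sub_linear_le: "norm (cis a - 1 - \<i> * of_real a) \<le> a\<^sup>2 / 2"
proof -
  have "cmod (iexp a - (\<Sum>k \<le> 1. (\<i> * a) ^ k / fact k)) \<le> \<bar>a\<bar> ^ Suc 1 / fact (Suc 1)"
    by (rule iexp_approx1)
  then show ?thesis by (simp add: cis_conv_exp diff_diff_add power2_eq_square)
qed

lemma has_vector_derivative_cis_linear:
  "((\<lambda>t. cis (- 2 * pi * t * \<xi>)) has_vector_derivative (\<i> * of_real (- 2 * pi * \<xi>)) * cis (- 2 * pi * t * \<xi>)) (at t)"
proof -
  have "((\<lambda>t::real. - 2 * pi * t * \<xi>) has_vector_derivative (- 2 * pi * \<xi>)) (at t)"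
    unfolding has_real_derivative_iff_has_vector_derivative[symmetric]
    by (auto intro!: derivative_eq_intros)
  from vector_diff_chain_at[OF this has_vector_derivative_iexp] show ?thesis
    by (simp add: o_def cis_conv_exp scaleR_conv_of_real ac_simps)
qed

lemma has_vector_derivative_quadratic_remainder:
  fixes f :: "real \<Rightarrow> 'a::real_normed_vector"
  assumes rem: "\<And>h. norm (f (x + h) - f x - h *\<^sub>R D) \<le> C * h\<^sup>2"
  shows "(f has_vector_derivative D) (at x)"
proof -
  have C_nonneg: "0 \<le> C" using order_trans[OF norm_ge_zero rem[of 1]] by simp
  have "(f has_derivative (\<lambda>h. h *\<^sub>R D)) (at x)"
    unfolding has_derivative_at_alt
  proof (intro conjI allI impI bounded_linear_scaleR_left)
    fix e :: real assume e: "e > 0"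
    show "\<exists>r>0. \<forall>y. norm (y - x) < r \<longrightarrow> norm (f y - f x - (y - x) *\<^sub>R D) \<le> e * norm (y - x)"
    proof (intro exI[of _ "e / (C + 1)"] conjI allI impI)
      show "0 < e / (C + 1)" using e C_nonneg by simp
      fix y assume y: "norm (y - x) < e / (C + 1)"
      have "C * \<bar>y - x\<bar> \<le> e"
      proof -
        have "C * \<bar>y - x\<bar> \<le> (C + 1) * \<bar>y - x\<bar>" by (simp add: algebra_simps)
        also have "\<dots> \<le> e" using y C_nonneg by (simp add: field_simps)
        finally show ?thesis .
      qed
      have "C * (y - x)\<^sup>2 = (C * \<bar>y - x\<bar>) * \<bar>y - x\<bar>"
        by (simp add: power2_eq_square mult.assoc)
      also have "\<dots> \<le> e * \<bar>y - x\<bar>"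
        using \<open>C * \<bar>y - x\<bar> \<le> e\<close> by (rule mult_right_mono) simp
      finally have "C * (y - x)\<^sup>2 \<le> e * \<bar>y - x\<bar>" .
      then show "norm (f y - f x - (y - x) *\<^sub>R D) \<le> e * norm (y - x)"
        using rem[of "y - x"] by simp
    qed
  qed
  then show ?thesis unfolding has_vector_derivative_def .
qed

lemma norm_fourier_integrand_remainder_le:
  "norm (g t * cis (- 2 * pi * t * (\<xi> + h)) - g t * cis (- 2 * pi * t * \<xi>)
      - h *\<^sub>R ((- 2 * pi * \<i>) * (monomial_mult 1 g t * cis (- 2 * pi * t * \<xi>))))
    \<le> h\<^sup>2 * (2 * pi\<^sup>2) * norm (monomial_mult 2 g t)"
proof -
  let ?a = "- 2 * pi * t * h"
  have "cis (- 2 * pi * t * \<xi>) * cis ?a = cis (- 2 * pi * t * (\<xi> + h))"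
    by (subst cis_mult) (simp add: algebra_simps)
  then have "g t * cis (- 2 * pi * t * (\<xi> + h)) - g t * cis (- 2 * pi * t * \<xi>)
      - h *\<^sub>R ((- 2 * pi * \<i>) * (monomial_mult 1 g t * cis (- 2 * pi * t * \<xi>)))
      = g t * cis (- 2 * pi * t * \<xi>) * (cis ?a - 1 - \<i> * of_real ?a)"
    by (simp add: monomial_mult_def algebra_simps scaleR_conv_of_real)
  also have "norm \<dots> = norm (g t) * norm (cis ?a - 1 - \<i> * of_real ?a)"
    by (simp add: norm_mult)
  also have "\<dots> \<le> norm (g t) * (?a\<^sup>2 / 2)"
    by (intro mult_left_mono norm_cis_sub_linear_le) auto
  also have "\<dots> = h\<^sup>2 * (2 * pi\<^sup>2) * norm (monomial_mult 2 g t)"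
    by (simp add: monomial_mult_def norm_mult norm_power power_mult_distrib)
  finally show ?thesis .
qed

lemma fourier_quadratic_remainder:
  assumes g: "rapidly_decreasing g"
  shows "norm (fourier g (\<xi> + h) - fourier g \<xi> - h *\<^sub>R ((- 2 * pi * \<i>) * fourier (monomial_mult 1 g) \<xi>))
    \<le> (2 * pi\<^sup>2 * (\<integral>t. norm (monomial_mult 2 g t) \<partial>lborel)) * h\<^sup>2"
proof -
  let ?e = "\<lambda>\<eta> t. cis (- 2 * pi * t * \<eta>)"
  let ?r = "\<lambda>t. g t * ?e (\<xi> + h) t - g t * ?e \<xi> t - h *\<^sub>R ((- 2 * pi * \<i>) * (monomial_mult 1 g t * ?e \<xi> t))"
  have eq: "fourier g (\<xi> + h) - fourier g \<xi> - h *\<^sub>R ((- 2 * pi * \<i>) * fourier (monomial_mult 1 g) \<xi>)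
      = (\<integral>t. ?r t \<partial>lborel)"
  proof -
    have int_g: "integrable lborel (\<lambda>t. g t * ?e \<eta> t)" for \<eta>
      by (rule integrable_fourier_integrand[OF g])
    have "integrable lborel (\<lambda>t. h *\<^sub>R ((- 2 * pi * \<i>) * (monomial_mult 1 g t * ?e \<xi> t)))"
      using integrable_fourier_integrand[OF rapidly_decreasing_monomial_mult[OF g]] by simp
    then have "(\<integral>t. ?r t \<partial>lborel) = (\<integral>t. g t * ?e (\<xi> + h) t \<partial>lborel) - (\<integral>t. g t * ?e \<xi> t \<partial>lborel)
        - (\<integral>t. h *\<^sub>R ((- 2 * pi * \<i>) * (monomial_mult 1 g t * ?e \<xi> t)) \<partial>lborel)"
      using int_g by (simp only: Bochner_Integration.integral_diff Bochner_Integration.integrable_diff)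
    then show ?thesis
      by (simp only: fourier_def integral_scaleR_right integral_mult_right_zero)
  qed
  have "norm (fourier g (\<xi> + h) - fourier g \<xi> - h *\<^sub>R ((- 2 * pi * \<i>) * fourier (monomial_mult 1 g) \<xi>))
      \<le> (\<integral>t. norm (?r t) \<partial>lborel)"
    unfolding eq by (rule integral_norm_bound)
  also have "\<dots> \<le> (\<integral>t. h\<^sup>2 * (2 * pi\<^sup>2) * norm (monomial_mult 2 g t) \<partial>lborel)"
    by (rule integral_mono'[OF _ norm_fourier_integrand_remainder_le])
      (use rapidly_decreasing_integrable[OF rapidly_decreasing_monomial_mult[OF g]] in simp_all)
  also have "\<dots> = (2 * pi\<^sup>2 * (\<integral>t. norm (monomial_mult 2 g t) \<partial>lborel)) * h\<^sup>2"
    by simp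
  finally show ?thesis .
qed

lemma monomial_mult_0 [simp]: "monomial_mult 0 g = g"
  by (simp add: monomial_mult_def fun_eq_iff)

lemma monomial_mult_1_monomial_mult: "monomial_mult 1 (monomial_mult k g) = monomial_mult (Suc k) g"
  by (simp add: monomial_mult_def fun_eq_iff mult.assoc)

lemma has_vector_derivative_fourier_monomial_mult:
  assumes "rapidly_decreasing g"
  shows "(fourier (monomial_mult k g) has_vector_derivative
            (- 2 * pi * \<i>) * fourier (monomial_mult (Suc k) g) \<xi>) (at \<xi>)"
  using fourier_quadratic_remainder[OF rapidly_decreasing_monomial_mult[OF assms, of k]]
  unfolding monomial_mult_1_monomial_mult by (rule has_vector_derivative_quadratic_remainder)

lemma continuous_on_fourier_monomial_mult:
  "rapidly_decreasing g \<Longrightarrow> continuous_on UNIV (fourier (monomial_mult k g))"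
  by (rule continuous_on_vector_derivative)
    (use has_vector_derivative_fourier_monomial_mult has_vector_derivative_at_within in blast)

lemma fourier_monomial_mult_bounded:
  assumes "rapidly_decreasing g" shows "\<exists>M\<ge>0. \<forall>\<xi>. norm (fourier (monomial_mult k g) \<xi>) \<le> M"
  by (intro exI[of _ "\<integral>x. norm (monomial_mult k g x) \<partial>lborel"] conjI allI norm_fourier_le
      integral_nonneg_AE) auto

lemma fourier_monomial_mult_eq_0:
  assumes g: "rapidly_decreasing g" and vanish: "\<And>\<xi>. \<bar>\<xi>\<bar> < d \<Longrightarrow> fourier g \<xi> = 0"
  shows "\<bar>\<xi>\<bar> < d \<Longrightarrow> fourier (monomial_mult k g) \<xi> = 0"
proof (induction k arbitrary: \<xi>)
  case 0 then show ?case using vanish by simp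
next
  case (Suc k)
  have "open {-d<..<d}" "\<xi> \<in> {-d<..<d}" using Suc.prems by auto
  then have "((\<lambda>_. 0) has_vector_derivative (- 2 * pi * \<i>) * fourier (monomial_mult (Suc k) g) \<xi>) (at \<xi>)"
    by (rule has_vector_derivative_transform_within_open[OF has_vector_derivative_fourier_monomial_mult[OF g]])
      (use Suc.IH in auto)
  then have "(- 2 * pi * \<i>) * fourier (monomial_mult (Suc k) g) \<xi> = 0"
    using vector_derivative_unique_at has_vector_derivative_const by blast
  then show ?case by simp
qed

lemma fourier_derivative:
  assumes g: "rapidly_decreasing g" and g': "rapidly_decreasing g'"
    and D: "\<And>t. (g has_vector_derivative g' t) (at t)"
  shows "fourier g' \<xi> = (2 * pi * \<i> * \<xi>) * fourier g \<xi>"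
proof -
  let ?e = "\<lambda>t. cis (- 2 * pi * t * \<xi>)"
  let ?c = "\<i> * of_real (- 2 * pi * \<xi>)"
  have "(\<integral>t. g' t * ?e t + ?c * (g t * ?e t) \<partial>lborel) = 0"
  proof (rule integral_derivative_rapidly_decreasing)
    show "rapidly_decreasing (\<lambda>t. g t * ?e t)" by (rule rapidly_decreasing_fourier_integrand[OF g])
    show "rapidly_decreasing (\<lambda>t. g' t * ?e t + ?c * (g t * ?e t))"
      by (intro rapidly_decreasing_add rapidly_decreasing_fourier_integrand rapidly_decreasing_cmult g g')
    show "((\<lambda>t. g t * ?e t) has_vector_derivative g' t * ?e t + ?c * (g t * ?e t)) (at t)" for t
      using has_vector_derivative_mult[OF D[of t] has_vector_derivative_cis_linear[of \<xi> t]]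
      by (simp add: ac_simps)
  qed
  moreover have "(\<integral>t. g' t * ?e t + ?c * (g t * ?e t) \<partial>lborel) = fourier g' \<xi> + ?c * fourier g \<xi>"
  proof -
    have "integrable lborel (\<lambda>t. ?c * (g t * ?e t))"
      using integrable_fourier_integrand[OF g] by simp
    then show ?thesis unfolding fourier_def
      by (simp only: Bochner_Integration.integral_add[OF integrable_fourier_integrand[OF g']]
          integral_mult_right_zero)
  qed
  ultimately show ?thesis by (simp add: algebra_simps eq_neg_iff_add_eq_0)
qed

lemma norm_fourier_mult_square_le:
  assumes "rapidly_decreasing g" "rapidly_decreasing g'" "rapidly_decreasing g''"
    and "\<And>t. (g has_vector_derivative g' t) (at t)" "\<And>t. (g' has_vector_derivative g'' t) (at t)"
  shows "norm (fourier g \<xi>) * \<xi>\<^sup>2 \<le> (\<integral>t. norm (g'' t) \<partial>lborel) / (4 * pi\<^sup>2)"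
proof -
  have "fourier g'' \<xi> = (2 * pi * \<i> * \<xi>) * ((2 * pi * \<i> * \<xi>) * fourier g \<xi>)"
    using fourier_derivative[of g' g''] fourier_derivative[of g g'] assms by simp
  then have "(4 * pi\<^sup>2) * (norm (fourier g \<xi>) * \<xi>\<^sup>2) = norm (fourier g'' \<xi>)"
    by (simp add: norm_mult power2_eq_square abs_mult)
  also have "\<dots> \<le> (\<integral>t. norm (g'' t) \<partial>lborel)" by (rule norm_fourier_le)
  finally show ?thesis by (simp add: field_simps)
qed

lemma schwartz_derivatives:
  assumes "schwartz \<phi>"
  obtains D where "D 0 = \<phi>" "\<And>m x. (D m has_vector_derivative D (Suc m) x) (at x)"
    "\<And>m. rapidly_decreasing (D m)"
proof -
  obtain D where D0: "D 0 = \<phi>" and DD: "\<And>m x. (D m has_vector_derivative D (Suc m) x) (at x)"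
    and DB: "\<And>k m. \<exists>B. \<forall>x. \<bar>x\<bar> ^ k * norm (D m x) \<le> B"
    using assms unfolding schwartz_def by blast
  have "continuous_on UNIV (D m)" for m
    by (rule continuous_on_vector_derivative) (use DD has_vector_derivative_at_within in blast)
  with DB have "rapidly_decreasing (D m)" for m
    unfolding rapidly_decreasing_def by blast
  with that D0 DD show ?thesis by blast
qed

lemma schwartz_rapidly_decreasing: "schwartz \<phi> \<Longrightarrow> rapidly_decreasing \<phi>"
  by (metis schwartz_derivatives)

lemma has_vector_derivative_monomial_mult:
  assumes "\<And>x. (f has_vector_derivative f' x) (at x)"
  shows "(monomial_mult a f has_vector_derivative
           of_nat a * monomial_mult (a - 1) f t + monomial_mult a f' t) (at t)"
proof -
  have "((\<lambda>t. of_real (t ^ a)) has_vector_derivative of_real (real a * t ^ (a - 1))) (at t)"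
    by (intro has_vector_derivative_of_real) (use DERIV_pow[of a t] in simp)
  from has_vector_derivative_mult[OF this assms[of t]] show ?thesis
    unfolding monomial_mult_def by (simp add: algebra_simps)
qed

lemma schwartz_fourier_monomial_mult_decay:
  assumes "schwartz \<phi>"
  shows "\<exists>M\<ge>0. \<forall>\<xi>. norm (fourier (monomial_mult k \<phi>) \<xi>) * \<xi>\<^sup>2 \<le> M"
proof -
  obtain D where D0: "D 0 = \<phi>" and DD: "\<And>m x. (D m has_vector_derivative D (Suc m) x) (at x)"
    and rD: "\<And>m. rapidly_decreasing (D m)"
    using schwartz_derivatives[OF assms] by blast
  define g' where "g' = (\<lambda>t. of_nat k * monomial_mult (k - 1) (D 0) t + monomial_mult k (D 1) t)"
  define g'' where "g'' = (\<lambda>t. of_nat k * (of_nat (k - 1) * monomial_mult (k - 1 - 1) (D 0) t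
       + monomial_mult (k - 1) (D 1) t) + (of_nat k * monomial_mult (k - 1) (D 1) t + monomial_mult k (D 2) t))"
  have D01: "\<And>x. (D 0 has_vector_derivative D 1 x) (at x)"
    and D12: "\<And>x. (D 1 has_vector_derivative D 2 x) (at x)"
    using DD[of 0] DD[of 1] by (simp_all add: numeral_2_eq_2)
  have "norm (fourier (monomial_mult k (D 0)) \<xi>) * \<xi>\<^sup>2 \<le> (\<integral>t. norm (g'' t) \<partial>lborel) / (4 * pi\<^sup>2)" for \<xi>
  proof (rule norm_fourier_mult_square_le)
    show "rapidly_decreasing (monomial_mult k (D 0))" "rapidly_decreasing g'" "rapidly_decreasing g''"
      unfolding g'_def g''_def
      by (intro rapidly_decreasing_add rapidly_decreasing_cmult rapidly_decreasing_monomial_mult rD)+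
    show "(monomial_mult k (D 0) has_vector_derivative g' t) (at t)" for t
      unfolding g'_def by (rule has_vector_derivative_monomial_mult[OF D01])
    show "(g' has_vector_derivative g'' t) (at t)" for t
      unfolding g'_def g''_def
      by (intro has_vector_derivative_add has_vector_derivative_mult_right
          has_vector_derivative_monomial_mult D01 D12)
  qed
  moreover have "0 \<le> (\<integral>t. norm (g'' t) \<partial>lborel) / (4 * pi\<^sup>2)"
    by (intro divide_nonneg_pos integral_nonneg_AE) auto
  ultimately show ?thesis unfolding D0[symmetric] by blast
qed

lemma fourier_reflect_eq_integral:
  "fourier (\<lambda>t. \<phi> (- t)) \<xi> = (\<integral>s. \<phi> s * cis (2 * pi * s * \<xi>) \<partial>lborel)"
  unfolding fourier_def by (subst lborel_integral_real_affine[where c="-1" and t=0]) simp_all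

lemma fourier_reflect: "fourier (\<lambda>t. \<phi> (- t)) \<xi> = fourier \<phi> (- \<xi>)"
  unfolding fourier_reflect_eq_integral fourier_def by simp

lemma schwartz_reflect:
  assumes "schwartz \<phi>" shows "schwartz (\<lambda>t. \<phi> (- t))"
proof -
  obtain D where D0: "D 0 = \<phi>" and DD: "\<And>m x. (D m has_vector_derivative D (Suc m) x) (at x)"
    and DB: "\<And>k m. \<exists>B. \<forall>x. \<bar>x\<bar> ^ k * norm (D m x) \<le> B"
    using assms unfolding schwartz_def by blast
  define D' where "D' = (\<lambda>m t. (- 1) ^ m * D m (- t))"
  have "D' 0 = (\<lambda>t. \<phi> (- t))" by (simp add: D'_def D0)
  moreover have "(D' m has_vector_derivative D' (Suc m) x) (at x)" for m x
  proof -
    have "((\<lambda>t::real. - t) has_vector_derivative (- 1)) (at x)"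
      unfolding has_real_derivative_iff_has_vector_derivative[symmetric]
      by (auto intro!: derivative_eq_intros)
    then have "((D m \<circ> uminus) has_vector_derivative ((- 1) *\<^sub>R D (Suc m) (- x))) (at x)"
      by (rule vector_diff_chain_at) (simp add: DD)
    then have "((\<lambda>t. (- 1) ^ m * D m (- t)) has_vector_derivative (- 1) ^ m * ((- 1) *\<^sub>R D (Suc m) (- x))) (at x)"
      by (intro has_vector_derivative_mult_right) (simp add: o_def)
    then show ?thesis by (simp add: D'_def)
  qed
  moreover have "\<exists>B. \<forall>x. \<bar>x\<bar> ^ k * norm (D' m x) \<le> B" for k m
  proof -
    obtain B where B: "\<And>x. \<bar>x\<bar> ^ k * norm (D m x) \<le> B" using DB by blast
    show ?thesis by (rule exI[of _ B]) (use B[of "- _"] in \<open>simp add: D'_def norm_mult norm_power\<close>)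
  qed
  ultimately show ?thesis unfolding schwartz_def by blast
qed

section \<open>Fourier--Laplace integrals over the positive half-line\<close>

definition exp_2pi_i :: "complex \<Rightarrow> real \<Rightarrow> complex" where
  "exp_2pi_i z \<xi> = exp (2 * pi * \<i> * z * of_real \<xi>)"

definition fourier_laplace :: "(real \<Rightarrow> complex) \<Rightarrow> complex \<Rightarrow> complex" where
  "fourier_laplace F z = (LINT \<xi>:{0<..}|lborel. F \<xi> * exp_2pi_i z \<xi>)"

lemma norm_exp_2pi_i: "norm (exp_2pi_i z \<xi>) = exp (- 2 * pi * Im z * \<xi>)"
  by (simp add: exp_2pi_i_def)

lemma has_vector_derivative_exp_2pi_i:
  "(exp_2pi_i z has_vector_derivative (2 * pi * \<i> * z) * exp_2pi_i z \<xi>) (at \<xi>)"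
proof -
  have "((\<lambda>w. exp (2 * pi * \<i> * z * w)) has_field_derivative
          (2 * pi * \<i> * z) * exp (2 * pi * \<i> * z * of_real \<xi>)) (at (of_real \<xi>))"
    by (auto intro!: derivative_eq_intros)
  from has_vector_derivative_real_field[OF this] show ?thesis
    unfolding exp_2pi_i_def by (simp add: ac_simps)
qed

lemma continuous_on_exp_2pi_i: "continuous_on UNIV (exp_2pi_i z)"
  by (rule continuous_on_vector_derivative)
    (use has_vector_derivative_exp_2pi_i has_vector_derivative_at_within in blast)

lemma exp_2pi_i_add_of_real: "exp_2pi_i (z + of_real r) \<xi> = cis (2 * pi * r * \<xi>) * exp_2pi_i z \<xi>"
proof -
  have "2 * pi * \<i> * (z + of_real r) * of_real \<xi> =
        \<i> * of_real (2 * pi * r * \<xi>) + 2 * pi * \<i> * z * of_real \<xi>"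
    by (simp add: algebra_simps)
  then show ?thesis by (simp add: exp_2pi_i_def cis_conv_exp exp_add)
qed

lemma set_integral_exp_neg_Ioi:
  fixes a d :: real assumes a: "a > 0"
  shows "set_integrable lborel {d<..} (\<lambda>\<xi>. exp (- a * \<xi>))"
    and "(LINT \<xi>:{d<..}|lborel. exp (- a * \<xi>)) = exp (- a * d) / a"
proof -
  define F where "F = (\<lambda>\<xi>. - exp (- a * \<xi>) / a)"
  have D: "DERIV F x :> exp (- a * x)" for x
    unfolding F_def using a by (auto intro!: derivative_eq_intros)
  have lim_d: "((F \<circ> real_of_ereal) \<longlongrightarrow> F d) (at_right (ereal d))"
    unfolding ereal_tendsto_simps F_def
    by (intro tendsto_intros continuous_on_tendsto_compose[OF _ tendsto_ident_at]) (use a in auto)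
  have "((\<lambda>\<xi>. - exp (- a * \<xi>) / a) \<longlongrightarrow> - 0 / a) at_top"
    using a by (intro tendsto_intros filterlim_compose[OF exp_at_bot]
        filterlim_tendsto_neg_mult_at_bot[OF tendsto_const _ filterlim_ident]) auto
  then have lim_top: "((F \<circ> real_of_ereal) \<longlongrightarrow> 0) (at_left \<infinity>)"
    unfolding ereal_tendsto_simps F_def by simp
  note FTC = interval_integral_FTC_nonneg[of "ereal d" \<infinity> F "\<lambda>x. exp (- a * x)" "F d" 0,
      OF _ D _ _ lim_d lim_top]
  show "set_integrable lborel {d<..} (\<lambda>\<xi>. exp (- a * \<xi>))" using FTC(1) by simp
  have "(LBINT x=ereal d..\<infinity>. exp (- a * x)) = 0 - F d" using FTC(2) by simp
  then show "(LINT \<xi>:{d<..}|lborel. exp (- a * \<xi>)) = exp (- a * d) / a"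
    by (simp add: interval_lebesgue_integral_def F_def)
qed

lemma set_integral_inverse_square_Ioi:
  fixes d :: real assumes d: "d > 0"
  shows "set_integrable lborel {d<..} (\<lambda>\<xi>. 1 / \<xi>\<^sup>2)"
    and "(LINT \<xi>:{d<..}|lborel. 1 / \<xi>\<^sup>2) = 1 / d"
proof -
  define F where "F = (\<lambda>\<xi>::real. - 1 / \<xi>)"
  have D: "ereal d < ereal x \<Longrightarrow> DERIV F x :> 1 / x\<^sup>2" for x
    unfolding F_def using d by (auto intro!: derivative_eq_intros simp: power2_eq_square)
  have C: "ereal d < ereal x \<Longrightarrow> isCont (\<lambda>x. 1 / x\<^sup>2) x" for x
    using d by (auto intro!: continuous_intros)
  have lim_d: "((F \<circ> real_of_ereal) \<longlongrightarrow> F d) (at_right (ereal d))"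
    unfolding ereal_tendsto_simps F_def
    using d by (intro tendsto_intros tendsto_mono[OF at_le tendsto_ident_at]) auto
  have "((\<lambda>\<xi>::real. - 1 / \<xi>) \<longlongrightarrow> 0) at_top"
    by (intro tendsto_divide_0[OF tendsto_const] filterlim_at_top_imp_at_infinity filterlim_ident)
  then have lim_top: "((F \<circ> real_of_ereal) \<longlongrightarrow> 0) (at_left \<infinity>)"
    unfolding ereal_tendsto_simps F_def .
  note FTC = interval_integral_FTC_nonneg[of "ereal d" \<infinity> F "\<lambda>x. 1 / x\<^sup>2" "F d" 0,
      OF _ D C _ lim_d lim_top]
  show "set_integrable lborel {d<..} (\<lambda>\<xi>. 1 / \<xi>\<^sup>2)" using FTC(1) by simp
  have "(LBINT x=ereal d..\<infinity>. 1 / x\<^sup>2) = 0 - F d" using FTC(2) by simp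
  then show "(LINT \<xi>:{d<..}|lborel. 1 / \<xi>\<^sup>2) = 1 / d"
    by (simp add: interval_lebesgue_integral_def F_def)
qed

lemma set_integrable_bounded_mult_exp_2pi_i:
  assumes F: "continuous_on UNIV F" and M: "\<And>\<xi>. norm (F \<xi>) \<le> M" and z: "Im z > 0"
  shows "set_integrable lborel {d<..} (\<lambda>\<xi>. F \<xi> * exp_2pi_i z \<xi>)"
proof (rule set_integrable_bound[where f="\<lambda>\<xi>. M * exp (- (2 * pi * Im z) * \<xi>)"])
  show "set_integrable lborel {d<..} (\<lambda>\<xi>. M * exp (- (2 * pi * Im z) * \<xi>))"
    using set_integral_exp_neg_Ioi(1)[of "2 * pi * Im z" d] z by (intro set_integrable_mult_right) auto
  have [measurable]: "(\<lambda>\<xi>. F \<xi> * exp_2pi_i z \<xi>) \<in> borel_measurable borel"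
    by (intro borel_measurable_continuous_onI continuous_on_mult F continuous_on_exp_2pi_i)
  show "set_borel_measurable lborel {d<..} (\<lambda>\<xi>. F \<xi> * exp_2pi_i z \<xi>)"
    unfolding set_borel_measurable_def by measurable
  have "0 \<le> M" using order_trans[OF norm_ge_zero M] .
  then show "AE x in lborel. x \<in> {d<..} \<longrightarrow>
      norm (F x * exp_2pi_i z x) \<le> norm (M * exp (- (2 * pi * Im z) * x))"
    using M by (auto simp: norm_mult norm_exp_2pi_i intro!: mult_right_mono)
qed

lemma fourier_laplace_cmult: "fourier_laplace (\<lambda>\<xi>. c * F \<xi>) z = c * fourier_laplace F z"
  unfolding fourier_laplace_def by (simp only: mult.assoc set_integral_mult_right)

lemma fourier_laplace_add_of_real:
  "fourier_laplace F (z + of_real r) = fourier_laplace (\<lambda>\<xi>. F \<xi> * cis (2 * pi * r * \<xi>)) z"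
  unfolding fourier_laplace_def exp_2pi_i_add_of_real by (simp only: mult.assoc)

lemma bounded_mult_exp_2pi_i_tendsto_0:
  assumes M: "\<And>\<xi>. norm (F \<xi>) \<le> M" and z: "Im z > 0"
  shows "((\<lambda>\<xi>. F \<xi> * exp_2pi_i z \<xi>) \<longlongrightarrow> 0) at_top"
proof -
  have "((\<lambda>\<xi>. M * exp (- (2 * pi * Im z) * \<xi>)) \<longlongrightarrow> M * 0) at_top"
    using z by (intro tendsto_intros filterlim_compose[OF exp_at_bot]
        filterlim_tendsto_neg_mult_at_bot[OF tendsto_const _ filterlim_ident]) auto
  then have "((\<lambda>\<xi>. M * exp (- (2 * pi * Im z) * \<xi>)) \<longlongrightarrow> 0) at_top" by simp
  moreover have "eventually (\<lambda>\<xi>. norm (F \<xi> * exp_2pi_i z \<xi>) \<le> M * exp (- (2 * pi * Im z) * \<xi>)) at_top"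
    using M by (auto simp: norm_mult norm_exp_2pi_i intro!: always_eventually mult_right_mono)
  ultimately show ?thesis by (rule Lim_null_comparison[rotated])
qed

lemma fourier_laplace_one:
  assumes z: "Im z > 0"
  shows "fourier_laplace (\<lambda>_. 1) z = - 1 / (2 * pi * \<i> * z)"
proof -
  let ?c = "2 * pi * \<i> * z"
  have c: "?c \<noteq> 0" using z by auto
  define F where "F = (\<lambda>\<xi>. exp_2pi_i z \<xi> / ?c)"
  have F_cont: "continuous_on UNIV F"
    unfolding F_def by (intro continuous_on_divide continuous_on_const continuous_on_exp_2pi_i) (use c in auto)
  have "fourier_laplace (\<lambda>_. 1) z = (LBINT \<xi>=ereal 0..\<infinity>. exp_2pi_i z \<xi>)"
    by (simp add: fourier_laplace_def interval_lebesgue_integral_def)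
  also have "\<dots> = 0 - F 0"
  proof (rule interval_integral_FTC_integrable)
    show "ereal 0 < \<infinity>" by simp
    show "(F has_vector_derivative exp_2pi_i z x) (at x)" for x
      unfolding F_def using has_vector_derivative_divide[OF has_vector_derivative_exp_2pi_i[of z x], of ?c] c
      by simp
    show "isCont (exp_2pi_i z) x" for x
      using continuous_on_exp_2pi_i[of z] by (simp add: continuous_on_eq_continuous_at)
    show "set_integrable lborel (einterval (ereal 0) \<infinity>) (exp_2pi_i z)"
      using set_integrable_bounded_mult_exp_2pi_i[of "\<lambda>_. 1" 1 z 0] z by simp
    have "(F \<longlongrightarrow> F 0) (at 0)"
      using F_cont by (simp add: continuous_on_eq_continuous_at isCont_def)
    then have "(F \<longlongrightarrow> F 0) (at_right 0)" by (rule tendsto_mono[OF at_le[OF subset_UNIV]])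
    then show "((F \<circ> real_of_ereal) \<longlongrightarrow> F 0) (at_right (ereal 0))" by (simp add: ereal_tendsto_simps)
    have "((\<lambda>\<xi>. 1 / ?c * exp_2pi_i z \<xi>) \<longlongrightarrow> 0) at_top"
      by (rule bounded_mult_exp_2pi_i_tendsto_0[of "\<lambda>_. 1 / ?c" "norm (1 / ?c)", OF order_refl z])
    then show "((F \<circ> real_of_ereal) \<longlongrightarrow> 0) (at_left \<infinity>)"
      by (simp add: ereal_tendsto_simps F_def)
  qed
  also have "\<dots> = - 1 / ?c" by (simp add: F_def exp_2pi_i_def)
  finally show ?thesis .
qed

lemma fourier_laplace_derivative:
  assumes FD: "\<And>\<xi>. (F has_vector_derivative F' \<xi>) (at \<xi>)" and F'_cont: "continuous_on UNIV F'"
    and M: "\<And>\<xi>. norm (F \<xi>) \<le> M" and M': "\<And>\<xi>. norm (F' \<xi>) \<le> M'"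
    and F0: "F 0 = 0" and z: "Im z > 0"
  shows "fourier_laplace F' z = - (2 * pi * \<i> * z) * fourier_laplace F z"
proof -
  let ?c = "2 * pi * \<i> * z"
  have F_cont: "continuous_on UNIV F"
    by (rule continuous_on_vector_derivative) (use FD has_vector_derivative_at_within in blast)
  define H where "H = (\<lambda>\<xi>. F \<xi> * exp_2pi_i z \<xi>)"
  define H' where "H' = (\<lambda>\<xi>. F' \<xi> * exp_2pi_i z \<xi> + ?c * (F \<xi> * exp_2pi_i z \<xi>))"
  have int1: "set_integrable lborel {0<..} (\<lambda>\<xi>. F' \<xi> * exp_2pi_i z \<xi>)"
    by (rule set_integrable_bounded_mult_exp_2pi_i[OF F'_cont M' z])
  have int2: "set_integrable lborel {0<..} (\<lambda>\<xi>. ?c * (F \<xi> * exp_2pi_i z \<xi>))"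
    by (rule set_integrable_mult_right[OF set_integrable_bounded_mult_exp_2pi_i[OF F_cont M z]])
  have "(LBINT \<xi>=ereal 0..\<infinity>. H' \<xi>) = 0 - 0"
  proof (rule interval_integral_FTC_integrable)
    show "ereal 0 < \<infinity>" by simp
    show "(H has_vector_derivative H' \<xi>) (at \<xi>)" for \<xi>
      unfolding H_def H'_def
      using has_vector_derivative_mult[OF FD[of \<xi>] has_vector_derivative_exp_2pi_i[of z \<xi>]]
      by (simp add: ac_simps)
    have "continuous_on UNIV H'" unfolding H'_def
      by (intro continuous_on_add continuous_on_mult continuous_on_const F'_cont F_cont
          continuous_on_exp_2pi_i)
    then show "isCont H' x" for x by (simp add: continuous_on_eq_continuous_at)
    show "set_integrable lborel (einterval (ereal 0) \<infinity>) H'"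
      unfolding H'_def einterval_eq_Ici by (rule set_integral_add(1)[OF int1 int2])
    have "continuous_on UNIV H" unfolding H_def by (intro continuous_on_mult F_cont continuous_on_exp_2pi_i)
    then have "(H \<longlongrightarrow> H 0) (at 0)" by (simp add: continuous_on_eq_continuous_at isCont_def)
    then have "(H \<longlongrightarrow> 0) (at_right 0)"
      using F0 by (simp add: H_def tendsto_mono[OF at_le[OF subset_UNIV]])
    then show "((H \<circ> real_of_ereal) \<longlongrightarrow> 0) (at_right (ereal 0))" by (simp add: ereal_tendsto_simps)
    have "(H \<longlongrightarrow> 0) at_top"
      unfolding H_def by (rule bounded_mult_exp_2pi_i_tendsto_0[OF M z])
    then show "((H \<circ> real_of_ereal) \<longlongrightarrow> 0) (at_left \<infinity>)" by (simp add: ereal_tendsto_simps)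
  qed
  then have "(LINT \<xi>:{0<..}|lborel. H' \<xi>) = 0"
    by (simp add: interval_lebesgue_integral_def)
  moreover have "(LINT \<xi>:{0<..}|lborel. H' \<xi>) = fourier_laplace F' z + ?c * fourier_laplace F z"
    unfolding H'_def fourier_laplace_def
    by (simp only: set_integral_add(2)[OF int1 int2] set_integral_mult_right)
  ultimately show ?thesis by (simp add: algebra_simps eq_neg_iff_add_eq_0)
qed

(* The vanishing of fourier g near 0 kills the boundary terms of the integrations by parts. *)

lemma fourier_laplace_fourier_monomial_mult:
  assumes g: "rapidly_decreasing g" and vanish: "\<And>\<xi>. \<bar>\<xi>\<bar> < d \<Longrightarrow> fourier g \<xi> = 0"
    and d: "d > 0" and z: "Im z > 0"
  shows "z ^ k * fourier_laplace (fourier g) z = fourier_laplace (fourier (monomial_mult k g)) z"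
proof (induction k)
  case 0 then show ?case by simp
next
  case (Suc k)
  let ?c = "- 2 * pi * \<i>"
  let ?X = "fourier_laplace (fourier (monomial_mult (Suc k) g)) z"
  let ?Y = "fourier_laplace (fourier (monomial_mult k g)) z"
  obtain M where M: "\<And>\<xi>. norm (fourier (monomial_mult k g) \<xi>) \<le> M"
    using fourier_monomial_mult_bounded[OF g] by blast
  obtain M' where M': "\<And>\<xi>. norm (fourier (monomial_mult (Suc k) g) \<xi>) \<le> M'"
    using fourier_monomial_mult_bounded[OF g] by blast
  have "?c * ?X = fourier_laplace (\<lambda>\<xi>. ?c * fourier (monomial_mult (Suc k) g) \<xi>) z"
    by (rule fourier_laplace_cmult[symmetric])
  also have "\<dots> = - (2 * pi * \<i> * z) * ?Y"
  proof (rule fourier_laplace_derivative[OF has_vector_derivative_fourier_monomial_mult[OF g] _ M _ _ z])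
    show "continuous_on UNIV (\<lambda>\<xi>. ?c * fourier (monomial_mult (Suc k) g) \<xi>)"
      by (intro continuous_on_mult continuous_on_const continuous_on_fourier_monomial_mult[OF g])
    show "norm (?c * fourier (monomial_mult (Suc k) g) \<xi>) \<le> 2 * pi * M'" for \<xi>
      using M'[of \<xi>] by (simp add: norm_mult)
    show "fourier (monomial_mult k g) 0 = 0"
      using fourier_monomial_mult_eq_0[of g d, OF g vanish] d by simp
  qed
  also have "\<dots> = ?c * (z * ?Y)"
    by (simp add: algebra_simps)
  finally have "?X = z * ?Y"
    using mult_left_cancel[of ?c ?X "z * ?Y"] by simp
  with Suc.IH show ?case
    by (simp add: mult.assoc)
qed

lemma norm_fourier_laplace_le_tail:
  assumes G: "continuous_on UNIV G" and M: "\<And>\<xi>. norm (G \<xi>) \<le> M"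
    and vanish: "\<And>\<xi>. 0 < \<xi> \<Longrightarrow> \<xi> < d \<Longrightarrow> G \<xi> = 0" and d: "0 \<le> d" and z: "Im z > 0"
  shows "norm (fourier_laplace G z) \<le> (LINT \<xi>:{d<..}|lborel. norm (G \<xi>) * exp (- (2 * pi * Im z) * \<xi>))"
proof -
  have [measurable]: "G \<in> borel_measurable borel" "exp_2pi_i z \<in> borel_measurable borel"
    using G continuous_on_exp_2pi_i by (auto intro: borel_measurable_continuous_onI)
  have "norm (fourier_laplace G z) \<le> (LINT \<xi>:{0<..}|lborel. norm (G \<xi> * exp_2pi_i z \<xi>))"
    unfolding fourier_laplace_def
    by (rule set_integral_norm_bound[OF set_integrable_bounded_mult_exp_2pi_i[OF G M z]])
  also have "\<dots> = (LINT \<xi>:{d<..}|lborel. norm (G \<xi> * exp_2pi_i z \<xi>))"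
    unfolding set_lebesgue_integral_def
  proof (rule integral_cong_AE)
    show "AE \<xi> in lborel. indicator {0<..} \<xi> *\<^sub>R norm (G \<xi> * exp_2pi_i z \<xi>)
        = indicator {d<..} \<xi> *\<^sub>R norm (G \<xi> * exp_2pi_i z \<xi>)"
      using AE_lborel_singleton[of d]
      by eventually_elim (use vanish d in \<open>auto simp: indicator_def\<close>)
  qed measurable
  also have "\<dots> = (LINT \<xi>:{d<..}|lborel. norm (G \<xi>) * exp (- (2 * pi * Im z) * \<xi>))"
    by (simp add: norm_mult norm_exp_2pi_i)
  finally show ?thesis .
qed

lemma tail_integral_le_of_bounded:
  assumes M: "\<And>\<xi>. norm (G \<xi>) \<le> M" and a: "a > 0"
    and int: "set_integrable lborel {d<..} (\<lambda>\<xi>. norm (G \<xi>) * exp (- a * \<xi>))"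
  shows "(LINT \<xi>:{d<..}|lborel. norm (G \<xi>) * exp (- a * \<xi>)) \<le> M * exp (- a * d) / a"
proof -
  have "(LINT \<xi>:{d<..}|lborel. norm (G \<xi>) * exp (- a * \<xi>)) \<le> (LINT \<xi>:{d<..}|lborel. M * exp (- a * \<xi>))"
  proof (rule set_integral_mono[OF int])
    show "set_integrable lborel {d<..} (\<lambda>\<xi>. M * exp (- a * \<xi>))"
      using set_integral_exp_neg_Ioi(1)[OF a] by (rule set_integrable_mult_right)
    show "norm (G \<xi>) * exp (- a * \<xi>) \<le> M * exp (- a * \<xi>)" for \<xi>
      using M[of \<xi>] by (rule mult_right_mono) simp
  qed
  also have "\<dots> = M * exp (- a * d) / a"
    using set_integral_exp_neg_Ioi(2)[OF a] by (simp only: set_integral_mult_right) simp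
  finally show ?thesis .
qed

lemma tail_integral_le_of_decay:
  assumes M': "\<And>\<xi>. norm (G \<xi>) * \<xi>\<^sup>2 \<le> M'" and a: "a \<ge> 0" and d: "d > 0"
    and int: "set_integrable lborel {d<..} (\<lambda>\<xi>. norm (G \<xi>) * exp (- a * \<xi>))"
  shows "(LINT \<xi>:{d<..}|lborel. norm (G \<xi>) * exp (- a * \<xi>)) \<le> M' * exp (- a * d) / d"
proof -
  have M'_nonneg: "0 \<le> M'" using M'[of 0] by simp
  have "(LINT \<xi>:{d<..}|lborel. norm (G \<xi>) * exp (- a * \<xi>))
      \<le> (LINT \<xi>:{d<..}|lborel. M' * exp (- a * d) * (1 / \<xi>\<^sup>2))"
  proof (rule set_integral_mono[OF int])
    show "set_integrable lborel {d<..} (\<lambda>\<xi>. M' * exp (- a * d) * (1 / \<xi>\<^sup>2))"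
      using set_integral_inverse_square_Ioi(1)[OF d] by (rule set_integrable_mult_right)
    fix \<xi> :: real assume "\<xi> \<in> {d<..}"
    then have \<xi>: "\<xi> > d" by simp
    have "norm (G \<xi>) \<le> M' / \<xi>\<^sup>2" using M'[of \<xi>] \<xi> d by (simp add: field_simps)
    moreover have "exp (- a * \<xi>) \<le> exp (- a * d)" using \<xi> a by (simp add: mult_left_mono)
    ultimately have "norm (G \<xi>) * exp (- a * \<xi>) \<le> M' / \<xi>\<^sup>2 * exp (- a * d)"
      by (intro mult_mono) (use M'_nonneg in auto)
    then show "norm (G \<xi>) * exp (- a * \<xi>) \<le> M' * exp (- a * d) * (1 / \<xi>\<^sup>2)" by simp
  qed
  also have "\<dots> = M' * exp (- a * d) / d"
    using set_integral_inverse_square_Ioi(2)[OF d] by (simp only: set_integral_mult_right) simp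
  finally show ?thesis .
qed

lemma min_div_le_div_sqrt:
  fixes a b y :: real
  assumes a: "0 \<le> a" and b: "0 \<le> b" and y: "y > 0"
  shows "min (a / y) b \<le> (a + b) / sqrt y"
proof (cases "y \<ge> 1")
  case True
  then have "y \<le> y\<^sup>2" using mult_left_mono[of 1 y y] by (simp add: power2_eq_square)
  then have "sqrt y \<le> y" using y by (intro real_le_lsqrt) auto
  then have "a / y \<le> a / sqrt y" using a y by (intro divide_left_mono) auto
  also have "\<dots> \<le> (a + b) / sqrt y" using b y by (intro divide_right_mono) auto
  finally show ?thesis by (rule min.coboundedI1)
next
  case False
  then have "b * sqrt y \<le> b" using b by (intro mult_left_le) auto
  then have "b \<le> b / sqrt y" using y by (simp add: le_divide_eq)
  also have "\<dots> \<le> (a + b) / sqrt y" using a y by (intro divide_right_mono) auto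
  finally show ?thesis by (rule min.coboundedI2)
qed

(* The bound M wins for large Im z, the decay M' / xi^2 for small Im z; this is where sqrt (Im z)
   comes from. *)

lemma norm_fourier_laplace_le:
  assumes G: "continuous_on UNIV G" and M: "\<And>\<xi>. norm (G \<xi>) \<le> M"
    and M': "\<And>\<xi>. norm (G \<xi>) * \<xi>\<^sup>2 \<le> M'"
    and vanish: "\<And>\<xi>. 0 < \<xi> \<Longrightarrow> \<xi> < d \<Longrightarrow> G \<xi> = 0" and d: "d > 0" and z: "Im z > 0"
  shows "norm (fourier_laplace G z) \<le> (M / (2 * pi) + M' / d) * exp (- 2 * pi * d * Im z) / sqrt (Im z)"
proof -
  define a where "a = 2 * pi * Im z"
  have a: "a > 0" using z by (simp add: a_def)
  have M_nonneg: "0 \<le> M" using order_trans[OF norm_ge_zero M] .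
  have M'_nonneg: "0 \<le> M'" using M'[of 0] by simp
  have int: "set_integrable lborel {d<..} (\<lambda>\<xi>. norm (G \<xi>) * exp (- a * \<xi>))"
    using set_integrable_norm[OF set_integrable_bounded_mult_exp_2pi_i[OF G M z, of d]]
    by (simp add: norm_mult norm_exp_2pi_i a_def)
  have "norm (fourier_laplace G z) \<le> (LINT \<xi>:{d<..}|lborel. norm (G \<xi>) * exp (- a * \<xi>))"
    unfolding a_def by (rule norm_fourier_laplace_le_tail[OF G M _ _ z]) (use vanish d in auto)
  also have "\<dots> \<le> min (M * exp (- a * d) / a) (M' * exp (- a * d) / d)"
    using tail_integral_le_of_bounded[OF M a int] tail_integral_le_of_decay[OF M' _ d int] a
    by simp
  also have "\<dots> = min (M / (2 * pi) * exp (- a * d) / Im z) (M' / d * exp (- a * d))"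
    by (simp add: a_def)
  also have "\<dots> \<le> (M / (2 * pi) * exp (- a * d) + M' / d * exp (- a * d)) / sqrt (Im z)"
    by (rule min_div_le_div_sqrt) (use M_nonneg M'_nonneg d z in auto)
  also have "exp (- a * d) = exp (- 2 * pi * d * Im z)"
    by (simp add: a_def ac_simps)
  finally show ?thesis by (simp add: distrib_right)
qed

section \<open>The Poisson integral\<close>

lemma poisson_kernel_eq_fourier_laplace:
  assumes y: "y > 0"
  shows "of_real (poisson_kernel y u) =
    fourier_laplace (\<lambda>_. 1) (Complex u y) + fourier_laplace (\<lambda>_. 1) (Complex (- u) y)"
proof -
  define z1 where "z1 = Complex u y"
  define z2 where "z2 = Complex (- u) y"
  have Im: "Im z1 > 0" "Im z2 > 0" using y by (auto simp: z1_def z2_def)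
  then have nz: "z1 \<noteq> 0" "z2 \<noteq> 0" by auto
  have sum: "z1 + z2 = 2 * \<i> * of_real y" by (simp add: z1_def z2_def complex_eq_iff)
  have prod: "z1 * z2 = - of_real (u\<^sup>2 + y\<^sup>2)"
    by (simp add: z1_def z2_def complex_eq_iff power2_eq_square)
  have frac: "- 1 / (a * b) + - 1 / (a * c) = - (b + c) / (a * (b * c))"
    if "a \<noteq> 0" "b \<noteq> 0" "c \<noteq> 0" for a b c :: complex
    using that by (simp add: field_simps)
  have "fourier_laplace (\<lambda>_. 1) z1 + fourier_laplace (\<lambda>_. 1) z2
      = - 1 / (2 * pi * \<i> * z1) + - 1 / (2 * pi * \<i> * z2)"
    by (simp only: fourier_laplace_one[OF Im(1)] fourier_laplace_one[OF Im(2)])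
  also have "\<dots> = - (z1 + z2) / (2 * pi * \<i> * (z1 * z2))"
    using nz by (intro frac) auto
  also have "\<dots> = of_real (y / (pi * (u\<^sup>2 + y\<^sup>2)))"
  proof -
    have "- (2 * \<i> * of_real y) / (2 * pi * \<i> * - of_real s) = of_real (y / (pi * s))" for s :: real
    proof -
      have "- (2 * \<i> * of_real y) / (2 * pi * \<i> * - of_real s)
          = (2 * \<i>) * of_real y / ((2 * \<i>) * of_real (pi * s))"
        by (simp add: ac_simps)
      also have "\<dots> = of_real y / of_real (pi * s)" by (rule mult_divide_mult_cancel_left) simp
      finally show ?thesis by simp
    qed
    then show ?thesis unfolding sum prod .
  qed
  finally show ?thesis by (simp add: z1_def z2_def poisson_kernel_def)
qed

lemma integrable_fourier_laplace_kernel: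
  assumes \<phi>: "rapidly_decreasing \<phi>" and z: "Im z > 0"
  shows "integrable (lborel \<Otimes>\<^sub>M lborel)
           (\<lambda>(s, \<xi>). indicator {0<..} \<xi> *\<^sub>R (\<phi> s * cis (c * s * \<xi>) * exp_2pi_i z \<xi>))"
proof (rule lborel_pair.Fubini_integrable)
  have "continuous_on UNIV (\<lambda>p::real \<times> real. \<phi> (fst p) * cis (c * fst p * snd p) * exp_2pi_i z (snd p))"
  proof (intro continuous_on_mult)
    show "continuous_on UNIV (\<lambda>p::real \<times> real. \<phi> (fst p))"
      by (rule continuous_on_compose2[OF rapidly_decreasing_continuous[OF \<phi>] continuous_on_fst]) auto
    show "continuous_on UNIV (\<lambda>p::real \<times> real. cis (c * fst p * snd p))"
      unfolding cis_conv_exp by (intro continuous_intros)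
    show "continuous_on UNIV (\<lambda>p::real \<times> real. exp_2pi_i z (snd p))"
      by (rule continuous_on_compose2[OF continuous_on_exp_2pi_i continuous_on_snd]) auto
  qed
  then have [measurable]: "(\<lambda>p::real \<times> real. \<phi> (fst p) * cis (c * fst p * snd p) * exp_2pi_i z (snd p))
      \<in> borel_measurable (lborel \<Otimes>\<^sub>M lborel)"
    unfolding lborel_prod measurable_lborel2 by (rule borel_measurable_continuous_onI)
  show "(\<lambda>(s, \<xi>). indicator {0<..} \<xi> *\<^sub>R (\<phi> s * cis (c * s * \<xi>) * exp_2pi_i z \<xi>))
      \<in> borel_measurable (lborel \<Otimes>\<^sub>M lborel)"
    unfolding case_prod_beta by measurable
  have "(\<integral>\<xi>. norm (indicator {0<..} \<xi> *\<^sub>R (\<phi> s * cis (c * s * \<xi>) * exp_2pi_i z \<xi>)) \<partial>lborel)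
      = norm (\<phi> s) * (LINT \<xi>:{0<..}|lborel. exp (- 2 * pi * Im z * \<xi>))" for s
  proof -
    have "(\<lambda>\<xi>. norm (indicator {0<..} \<xi> *\<^sub>R (\<phi> s * cis (c * s * \<xi>) * exp_2pi_i z \<xi>)))
        = (\<lambda>\<xi>. norm (\<phi> s) * (indicator {0<..} \<xi> *\<^sub>R exp (- 2 * pi * Im z * \<xi>)))"
      by (auto simp: norm_mult norm_exp_2pi_i indicator_def)
    then show ?thesis by (simp add: set_lebesgue_integral_def)
  qed
  then show "integrable lborel (\<lambda>s. \<integral>\<xi>. norm (case (s, \<xi>) of (s, \<xi>) \<Rightarrow>
      indicator {0<..} \<xi> *\<^sub>R (\<phi> s * cis (c * s * \<xi>) * exp_2pi_i z \<xi>)) \<partial>lborel)"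
    using integrable_norm[OF rapidly_decreasing_integrable[OF \<phi>]] by (simp add: ac_simps)
  have "set_integrable lborel {0<..} (\<lambda>\<xi>. (\<phi> s * cis (c * s * \<xi>)) * exp_2pi_i z \<xi>)" for s
    by (rule set_integrable_bounded_mult_exp_2pi_i[where M="norm (\<phi> s)"])
      (auto simp: norm_mult z intro!: continuous_intros)
  then show "AE s in lborel. integrable lborel (\<lambda>\<xi>. case (s, \<xi>) of (s, \<xi>) \<Rightarrow>
      indicator {0<..} \<xi> *\<^sub>R (\<phi> s * cis (c * s * \<xi>) * exp_2pi_i z \<xi>))"
    by (simp add: set_integrable_def)
qed

lemma fourier_laplace_integral_cis:
  assumes \<phi>: "rapidly_decreasing \<phi>" and z: "Im z > 0"
  shows "integrable lborel (\<lambda>s. \<phi> s * fourier_laplace (\<lambda>\<xi>. cis (c * s * \<xi>)) z)"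
    and "(\<integral>s. \<phi> s * fourier_laplace (\<lambda>\<xi>. cis (c * s * \<xi>)) z \<partial>lborel) =
         fourier_laplace (\<lambda>\<xi>. \<integral>s. \<phi> s * cis (c * s * \<xi>) \<partial>lborel) z"
proof -
  define f where "f = (\<lambda>s \<xi>. indicator {0<..} \<xi> *\<^sub>R (\<phi> s * cis (c * s * \<xi>) * exp_2pi_i z \<xi>))"
  have int: "integrable (lborel \<Otimes>\<^sub>M lborel) (case_prod f)"
    unfolding f_def by (rule integrable_fourier_laplace_kernel[OF \<phi> z])
  have inner_\<xi>: "(\<integral>\<xi>. f s \<xi> \<partial>lborel) = \<phi> s * fourier_laplace (\<lambda>\<xi>. cis (c * s * \<xi>)) z" for s
  proof -
    have "(\<integral>\<xi>. f s \<xi> \<partial>lborel) = (\<integral>\<xi>. \<phi> s * (indicator {0<..} \<xi> *\<^sub>R (cis (c * s * \<xi>) * exp_2pi_i z \<xi>)) \<partial>lborel)"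
      by (rule Bochner_Integration.integral_cong) (auto simp: f_def indicator_def ac_simps)
    then show ?thesis
      by (simp only: integral_mult_right_zero set_lebesgue_integral_def fourier_laplace_def)
  qed
  have inner_s: "(\<integral>s. f s \<xi> \<partial>lborel) = indicator {0<..} \<xi> *\<^sub>R ((\<integral>s. \<phi> s * cis (c * s * \<xi>) \<partial>lborel) * exp_2pi_i z \<xi>)" for \<xi>
    by (simp add: f_def)
  show "integrable lborel (\<lambda>s. \<phi> s * fourier_laplace (\<lambda>\<xi>. cis (c * s * \<xi>)) z)"
    using lborel_pair.integrable_fst'[OF int] by (simp add: inner_\<xi>)
  have "(\<integral>\<xi>. (\<integral>s. f s \<xi> \<partial>lborel) \<partial>lborel) = (\<integral>s. (\<integral>\<xi>. f s \<xi> \<partial>lborel) \<partial>lborel)"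
    by (rule lborel_pair.Fubini_integral[OF int])
  then show "(\<integral>s. \<phi> s * fourier_laplace (\<lambda>\<xi>. cis (c * s * \<xi>)) z \<partial>lborel) =
         fourier_laplace (\<lambda>\<xi>. \<integral>s. \<phi> s * cis (c * s * \<xi>) \<partial>lborel) z"
    by (simp add: inner_\<xi> inner_s set_lebesgue_integral_def fourier_laplace_def)
qed

(* Shifting P_y(x - s) by s multiplies the Fourier-Laplace integrands by e^(-+ 2 pi i s xi), so
   after Fubini the s-integrals are the Fourier transforms of phi and of its reflection. *)

lemma conv_poisson_kernel_eq:
  assumes \<phi>: "rapidly_decreasing \<phi>" and y: "y > 0"
  shows "conv \<phi> (\<lambda>t. of_real (poisson_kernel y t)) x =
     fourier_laplace (fourier \<phi>) (Complex x y) + fourier_laplace (fourier (\<lambda>t. \<phi> (- t))) (Complex (- x) y)"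
proof -
  define z where "z = Complex x y"
  define w where "w = Complex (- x) y"
  have z: "Im z > 0" and w: "Im w > 0" using y by (auto simp: z_def w_def)
  define L1 where "L1 = (\<lambda>s. fourier_laplace (\<lambda>\<xi>. cis ((- 2 * pi) * s * \<xi>)) z)"
  define L2 where "L2 = (\<lambda>s. fourier_laplace (\<lambda>\<xi>. cis ((2 * pi) * s * \<xi>)) w)"
  have kernel: "of_real (poisson_kernel y (x - s)) = L1 s + L2 s" for s
  proof -
    have shift: "Complex (x - s) y = z + of_real (- s)" "Complex (- (x - s)) y = w + of_real s"
      by (simp_all add: z_def w_def complex_eq_iff)
    show ?thesis
      unfolding poisson_kernel_eq_fourier_laplace[OF y] shift fourier_laplace_add_of_real L1_def L2_def
      by simp
  qed
  have int1: "integrable lborel (\<lambda>s. \<phi> s * L1 s)"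
    unfolding L1_def by (rule fourier_laplace_integral_cis(1)[OF \<phi> z])
  have int2: "integrable lborel (\<lambda>s. \<phi> s * L2 s)"
    unfolding L2_def by (rule fourier_laplace_integral_cis(1)[OF \<phi> w])
  have "conv \<phi> (\<lambda>t. of_real (poisson_kernel y t)) x = (\<integral>s. \<phi> s * of_real (poisson_kernel y (x - s)) \<partial>lborel)"
    unfolding conv_def by (subst lborel_integral_real_affine[where c="-1" and t=x]) simp_all
  also have "\<dots> = (\<integral>s. \<phi> s * L1 s \<partial>lborel) + (\<integral>s. \<phi> s * L2 s \<partial>lborel)"
    unfolding kernel distrib_left by (rule Bochner_Integration.integral_add[OF int1 int2])
  also have "(\<integral>s. \<phi> s * L1 s \<partial>lborel) = fourier_laplace (fourier \<phi>) z"
  proof -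
    have "(\<lambda>\<xi>. \<integral>s. \<phi> s * cis ((- 2 * pi) * s * \<xi>) \<partial>lborel) = fourier \<phi>"
      by (simp add: fun_eq_iff fourier_def)
    then show ?thesis unfolding L1_def fourier_laplace_integral_cis(2)[OF \<phi> z] by simp
  qed
  also have "(\<integral>s. \<phi> s * L2 s \<partial>lborel) = fourier_laplace (fourier (\<lambda>t. \<phi> (- t))) w"
  proof -
    have "(\<lambda>\<xi>. \<integral>s. \<phi> s * cis ((2 * pi) * s * \<xi>) \<partial>lborel) = fourier (\<lambda>t. \<phi> (- t))"
      by (simp add: fun_eq_iff fourier_reflect_eq_integral)
    then show ?thesis unfolding L2_def fourier_laplace_integral_cis(2)[OF \<phi> w] by simp
  qed
  finally show ?thesis by (simp add: z_def w_def)
qed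

lemma eq_0_if_dist_less_infdist_fsupp:
  assumes "dist a \<xi> < infdist a (fsupp f)" shows "f \<xi> = 0"
proof (rule ccontr)
  assume "f \<xi> \<noteq> 0"
  then have "\<xi> \<in> fsupp f" unfolding fsupp_def by (intro closure_subset[THEN subsetD]) simp
  then have "infdist a (fsupp f) \<le> dist a \<xi>" by (rule infdist_le)
  with assms show False by linarith
qed

lemma norm_power_mult_fourier_laplace_fourier_le:
  assumes \<psi>: "schwartz \<psi>" and vanish: "\<And>\<xi>. \<bar>\<xi>\<bar> < d \<Longrightarrow> fourier \<psi> \<xi> = 0" and d: "d > 0"
  shows "\<exists>K\<ge>0. \<forall>z. Im z > 0 \<longrightarrow>
     norm (z ^ k * fourier_laplace (fourier \<psi>) z) \<le> K * exp (- 2 * pi * d * Im z) / sqrt (Im z)"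
proof -
  have r: "rapidly_decreasing \<psi>" by (rule schwartz_rapidly_decreasing[OF \<psi>])
  obtain M where M_nonneg: "M \<ge> 0" and M: "\<And>\<xi>. norm (fourier (monomial_mult k \<psi>) \<xi>) \<le> M"
    using fourier_monomial_mult_bounded[OF r] by blast
  obtain M' where M'_nonneg: "M' \<ge> 0"
    and M': "\<And>\<xi>. norm (fourier (monomial_mult k \<psi>) \<xi>) * \<xi>\<^sup>2 \<le> M'"
    using schwartz_fourier_monomial_mult_decay[OF \<psi>] by blast
  have "norm (z ^ k * fourier_laplace (fourier \<psi>) z)
      \<le> (M / (2 * pi) + M' / d) * exp (- 2 * pi * d * Im z) / sqrt (Im z)" if z: "Im z > 0" for z
  proof -
    have "z ^ k * fourier_laplace (fourier \<psi>) z = fourier_laplace (fourier (monomial_mult k \<psi>)) z"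
      by (rule fourier_laplace_fourier_monomial_mult[of \<psi> d, OF r vanish d z])
    also have "norm \<dots> \<le> (M / (2 * pi) + M' / d) * exp (- 2 * pi * d * Im z) / sqrt (Im z)"
      by (rule norm_fourier_laplace_le[OF continuous_on_fourier_monomial_mult[OF r] M M' _ d z])
        (use fourier_monomial_mult_eq_0[of \<psi> d, OF r vanish] in auto)
    finally show ?thesis .
  qed
  moreover have "0 \<le> M / (2 * pi) + M' / d" using M_nonneg M'_nonneg d by simp
  ultimately show ?thesis by blast
qed

lemma fourier_laplace_fourier_bound:
  assumes "schwartz \<psi>" and "\<And>\<xi>. \<bar>\<xi>\<bar> < d \<Longrightarrow> fourier \<psi> \<xi> = 0" and "d > 0"
  shows "\<exists>K\<ge>0. \<forall>z. Im z > 0 \<longrightarrow> (1 + norm z ^ n) * norm (fourier_laplace (fourier \<psi>) z)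
           \<le> K * exp (- 2 * pi * d * Im z) / sqrt (Im z)"
proof -
  obtain K0 where "K0 \<ge> 0" and K0: "\<And>z. Im z > 0 \<Longrightarrow>
      norm (z ^ 0 * fourier_laplace (fourier \<psi>) z) \<le> K0 * exp (- 2 * pi * d * Im z) / sqrt (Im z)"
    using norm_power_mult_fourier_laplace_fourier_le[OF assms] by blast
  obtain Kn where "Kn \<ge> 0" and Kn: "\<And>z. Im z > 0 \<Longrightarrow>
      norm (z ^ n * fourier_laplace (fourier \<psi>) z) \<le> Kn * exp (- 2 * pi * d * Im z) / sqrt (Im z)"
    using norm_power_mult_fourier_laplace_fourier_le[OF assms] by blast
  have "(1 + norm z ^ n) * norm (fourier_laplace (fourier \<psi>) z)
      \<le> (K0 + Kn) * exp (- 2 * pi * d * Im z) / sqrt (Im z)" if "Im z > 0" for z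
  proof -
    have "(1 + norm z ^ n) * norm (fourier_laplace (fourier \<psi>) z)
        = norm (z ^ 0 * fourier_laplace (fourier \<psi>) z) + norm (z ^ n * fourier_laplace (fourier \<psi>) z)"
      by (simp add: norm_mult norm_power distrib_right)
    also have "\<dots> \<le> K0 * exp (- 2 * pi * d * Im z) / sqrt (Im z) + Kn * exp (- 2 * pi * d * Im z) / sqrt (Im z)"
      using K0[OF that] Kn[OF that] by (rule add_mono)
    also have "\<dots> = (K0 + Kn) * exp (- 2 * pi * d * Im z) / sqrt (Im z)"
      by (simp add: distrib_right add_divide_distrib)
    finally show ?thesis .
  qed
  with \<open>K0 \<ge> 0\<close> \<open>Kn \<ge> 0\<close> show ?thesis by (intro exI[of _ "K0 + Kn"]) auto
qed

lemma conv_poisson_kernel_bound: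
  assumes \<phi>: "schwartz \<phi>" and vanish: "\<And>\<xi>. \<bar>\<xi>\<bar> < d \<Longrightarrow> fourier \<phi> \<xi> = 0" and d: "d > 0"
  shows "\<exists>K\<ge>0. \<forall>x. \<forall>y>0. (1 + \<bar>x\<bar> ^ n) * norm (conv \<phi> (\<lambda>t. of_real (poisson_kernel y t)) x)
           \<le> K * exp (- 2 * pi * d * y) / sqrt y"
proof -
  have vanish_reflect: "fourier (\<lambda>t. \<phi> (- t)) \<xi> = 0" if "\<bar>\<xi>\<bar> < d" for \<xi>
    using vanish[of "- \<xi>"] that by (simp add: fourier_reflect)
  obtain K1 where "K1 \<ge> 0" and K1: "\<And>z. Im z > 0 \<Longrightarrow> (1 + norm z ^ n) * norm (fourier_laplace (fourier \<phi>) z)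
      \<le> K1 * exp (- 2 * pi * d * Im z) / sqrt (Im z)"
    using fourier_laplace_fourier_bound[OF \<phi> vanish d] by blast
  obtain K2 where "K2 \<ge> 0" and K2: "\<And>z. Im z > 0 \<Longrightarrow> (1 + norm z ^ n) * norm (fourier_laplace (fourier (\<lambda>t. \<phi> (- t))) z)
      \<le> K2 * exp (- 2 * pi * d * Im z) / sqrt (Im z)"
    using fourier_laplace_fourier_bound[OF schwartz_reflect[OF \<phi>] vanish_reflect d] by blast
  have "(1 + \<bar>x\<bar> ^ n) * norm (conv \<phi> (\<lambda>t. of_real (poisson_kernel y t)) x)
      \<le> (K1 + K2) * exp (- 2 * pi * d * y) / sqrt y" if y: "y > 0" for x y
  proof -
    define z where "z = Complex x y"
    define w where "w = Complex (- x) y"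
    let ?A = "fourier_laplace (fourier \<phi>) z"
    let ?B = "fourier_laplace (fourier (\<lambda>t. \<phi> (- t))) w"
    have Im: "Im z = y" "Im w = y" by (simp_all add: z_def w_def)
    have "\<bar>x\<bar> \<le> norm z" "\<bar>x\<bar> \<le> norm w"
      using abs_Re_le_cmod[of z] abs_Re_le_cmod[of w] by (simp_all add: z_def w_def)
    then have weights: "1 + \<bar>x\<bar> ^ n \<le> 1 + norm z ^ n" "1 + \<bar>x\<bar> ^ n \<le> 1 + norm w ^ n"
      by (simp_all add: power_mono)
    have "(1 + \<bar>x\<bar> ^ n) * norm (conv \<phi> (\<lambda>t. of_real (poisson_kernel y t)) x)
        = (1 + \<bar>x\<bar> ^ n) * norm (?A + ?B)"
      by (simp add: conv_poisson_kernel_eq[OF schwartz_rapidly_decreasing[OF \<phi>] y] z_def w_def)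
    also have "\<dots> \<le> (1 + \<bar>x\<bar> ^ n) * norm ?A + (1 + \<bar>x\<bar> ^ n) * norm ?B"
      by (simp add: distrib_left[symmetric] mult_left_mono norm_triangle_ineq add_nonneg_nonneg)
    also have "\<dots> \<le> (1 + norm z ^ n) * norm ?A + (1 + norm w ^ n) * norm ?B"
      using weights by (intro add_mono mult_right_mono) auto
    also have "\<dots> \<le> K1 * exp (- 2 * pi * d * y) / sqrt y + K2 * exp (- 2 * pi * d * y) / sqrt y"
      using K1[of z] K2[of w] Im y by (intro add_mono) auto
    also have "\<dots> = (K1 + K2) * exp (- 2 * pi * d * y) / sqrt y"
      by (simp add: distrib_right add_divide_distrib)
    finally show ?thesis .
  qed
  with \<open>K1 \<ge> 0\<close> \<open>K2 \<ge> 0\<close> show ?thesis by (intro exI[of _ "K1 + K2"]) auto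
qed

lemma norm_poly_le:
  fixes p :: "complex poly"
  shows "\<exists>C>0. \<forall>x::real. norm (poly p (of_real x)) \<le> C * (1 + \<bar>x\<bar> ^ degree p)"
proof -
  define C where "C = (\<Sum>i\<le>degree p. norm (coeff p i)) + 1"
  have "norm (poly p (of_real x)) \<le> C * (1 + \<bar>x\<bar> ^ degree p)" for x :: real
  proof -
    have power_le: "\<bar>x\<bar> ^ i \<le> 1 + \<bar>x\<bar> ^ degree p" if "i \<le> degree p" for i
    proof (cases "\<bar>x\<bar> \<le> 1")
      case True
      then show ?thesis using power_le_one[of "\<bar>x\<bar>" i] by (simp add: add_increasing2)
    next
      case False
      then have "\<bar>x\<bar> ^ i \<le> \<bar>x\<bar> ^ degree p" using that by (intro power_increasing) auto
      then show ?thesis by simp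
    qed
    have "norm (poly p (of_real x)) = norm (\<Sum>i\<le>degree p. coeff p i * of_real x ^ i)"
      by (simp add: poly_altdef)
    also have "\<dots> \<le> (\<Sum>i\<le>degree p. norm (coeff p i * of_real x ^ i))"
      by (rule norm_sum)
    also have "\<dots> = (\<Sum>i\<le>degree p. norm (coeff p i) * \<bar>x\<bar> ^ i)"
      by (simp add: norm_mult norm_power)
    also have "\<dots> \<le> (\<Sum>i\<le>degree p. norm (coeff p i) * (1 + \<bar>x\<bar> ^ degree p))"
      by (intro sum_mono mult_left_mono power_le) auto
    also have "\<dots> \<le> C * (1 + \<bar>x\<bar> ^ degree p)"
      unfolding C_def sum_distrib_right[symmetric] by (intro mult_right_mono) auto
    finally show ?thesis .
  qed
  moreover have "C > 0" unfolding C_def by (simp add: add_nonneg_pos sum_nonneg)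
  ultimately show ?thesis by blast
qed

lemma norm_poly_mult_conv_poisson_kernel_le:
  fixes p :: "complex poly"
  assumes "schwartz \<phi>" and "\<And>\<xi>. \<bar>\<xi>\<bar> < d \<Longrightarrow> fourier \<phi> \<xi> = 0" and "d > 0"
  shows "\<exists>C>0. \<forall>x::real. \<forall>y>0. norm (poly p (of_real x) * conv \<phi> (\<lambda>t. of_real (poisson_kernel y t)) x)
           \<le> C * exp (- 2 * pi * d * y) / sqrt y"
proof -
  obtain Cp where "Cp > 0"
    and Cp: "\<And>x::real. norm (poly p (of_real x)) \<le> Cp * (1 + \<bar>x\<bar> ^ degree p)"
    using norm_poly_le[of p] by blast
  obtain K where "K \<ge> 0" and K: "\<And>x y. y > 0 \<Longrightarrow> (1 + \<bar>x\<bar> ^ degree p)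
      * norm (conv \<phi> (\<lambda>t. of_real (poisson_kernel y t)) x) \<le> K * exp (- 2 * pi * d * y) / sqrt y"
    using conv_poisson_kernel_bound[OF assms] by blast
  have "norm (poly p (of_real x) * conv \<phi> (\<lambda>t. of_real (poisson_kernel y t)) x)
      \<le> (Cp * K + 1) * exp (- 2 * pi * d * y) / sqrt y" if y: "y > 0" for x y
  proof -
    let ?u = "conv \<phi> (\<lambda>t. of_real (poisson_kernel y t)) x"
    have "norm (poly p (of_real x) * ?u) \<le> Cp * ((1 + \<bar>x\<bar> ^ degree p) * norm ?u)"
      using mult_right_mono[OF Cp[of x] norm_ge_zero[of ?u]] by (simp add: norm_mult mult.assoc)
    also have "\<dots> \<le> Cp * K * exp (- 2 * pi * d * y) / sqrt y"
      using mult_left_mono[OF K[OF y], of Cp] \<open>Cp > 0\<close> by (simp add: mult.assoc)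
    also have "\<dots> \<le> (Cp * K + 1) * exp (- 2 * pi * d * y) / sqrt y"
      using y by (intro divide_right_mono mult_right_mono) auto
    finally show ?thesis .
  qed
  with \<open>Cp > 0\<close> \<open>K \<ge> 0\<close> show ?thesis
    by (intro exI[of _ "Cp * K + 1"]) (auto simp: add_nonneg_pos)
qed

(* The factor 1 + y^n is at least 1. *)

theorem lemma10:
  fixes \<phi> :: "real \<Rightarrow> complex" and p :: "complex poly" and d :: real and n :: nat
  assumes "schwartz \<phi>"
    and "d = infdist 0 (fsupp (fourier \<phi>))"
    and "d > 0"
    and "degree p = n"
  shows "\<exists>C>0. \<forall>x::real. \<forall>y>0.
           norm (poly p (complex_of_real x) *
                 conv \<phi> (\<lambda>t. complex_of_real (poisson_kernel y t)) x)
           \<le> C * (1 + y ^ n) * exp (- 2 * pi * d * y) / sqrt y"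
proof -
  have vanish: "fourier \<phi> \<xi> = 0" if "\<bar>\<xi>\<bar> < d" for \<xi>
    using eq_0_if_dist_less_infdist_fsupp[of 0 \<xi>] that assms(2) by simp
  obtain C where "C > 0" and C: "\<And>x y. y > 0 \<Longrightarrow>
      norm (poly p (of_real x) * conv \<phi> (\<lambda>t. of_real (poisson_kernel y t)) x)
        \<le> C * exp (- 2 * pi * d * y) / sqrt y"
    using norm_poly_mult_conv_poisson_kernel_le[OF assms(1) vanish assms(3)] by blast
  have "C * exp (- 2 * pi * d * y) / sqrt y \<le> C * (1 + y ^ n) * exp (- 2 * pi * d * y) / sqrt y"
    if "y > 0" for y
    using \<open>C > 0\<close> that by (intro divide_right_mono mult_right_mono) (auto simp: mult_le_cancel_left1)
  with C \<open>C > 0\<close> show ?thesis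
    by (blast intro: order_trans)
qed

end
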